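(* Let $k\ge1$ and let $A_1,\dots,A_n$ be independent events with probabilities $u_i=\mathbf{P}(A_i)\in[0,1]$, where the sequence $u_1,\dots,u_n$ is either nondecreasing or nonincreasing. Then \[ \mathbf{P}\big(\{A_i\}_{i=1}^n\text{ has no }k\text{-gaps}\big)\;\ge\;\prod_{i=1}^n f_k(1-u_i). \]
   Context: For an integer $k\ge1$, $f_k:[0,1]\to[0,1]$ denotes the unique decreasing function satisfying $f_k(x)^k-f_k(x)^{k+1}=x^k-x^{k+1}$ for all $x\in[0,1]$; it is continuous with $f_k(0)=1$, $f_k(1)=0$. A sequence of events $A_1,\dots,A_n$ has a $k$-gap if there is an index $i$ with $i+k-1\le n$ such that none of $A_i,\dots,A_{i+k-1}$ occurs. *)

theory Defs
  imports "HOL-Probability.Probability"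
begin

text \<open>f_k: the unique decreasing function h on [0,1] (with values in [0,1]) satisfying
  h(x)^k - h(x)^(k+1) = x^k - x^(k+1); extended by 0 outside [0,1] to make it unique as
  a HOL function.\<close>
definition fk :: "nat \<Rightarrow> real \<Rightarrow> real" where
  "fk k = (THE h. (\<forall>x\<in>{0..1}. h x \<in> {0..1} \<and> h x ^ k - h x ^ (k+1) = x ^ k - x ^ (k+1))
              \<and> antimono_on {0..1} h \<and> (\<forall>x. x \<notin> {0..1} \<longrightarrow> h x = 0))"

definition has_k_gap :: "nat \<Rightarrow> nat \<Rightarrow> (nat \<Rightarrow> 'a set) \<Rightarrow> 'a \<Rightarrow> bool" where
  "has_k_gap k n A w \<longleftrightarrow> (\<exists>i. 1 \<le> i \<and> i + k - 1 \<le> n \<and> (\<forall>j\<in>{i..i+k-1}. w \<notin> A j))"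

end

theory Submission
  imports Defs
begin

text \<open>
  Write q = 1 - u for a miss probability and y = f_k(q).  The implicit equation
  y^k - y^(k+1) = q^k - q^(k+1) is equivalent to y^k = (1 - q) h(y, q), where
  h(y, q) = y^(k-1) + y^(k-2) q + ... + q^(k-1).  This lets us define weights W_q(s) for the length
  s < k of the current run of misses with W_q(0) = 1, W_q(k) = 0 and
  y W_q(s) = (1 - q) + q W_q(s+1), and the weights decrease in q.  The potential after m trials is
  the expected weight of the current run on the event "no gap yet".  By independence, the next
  trial multiplies it exactly by f_k(q(m+1)); passing to the (smaller) miss probability of the
  following trial can only increase it, and it never exceeds P(no gap).  This gives the bound
  for nondecreasing u; the nonincreasing case follows by reversing the order of the events.
\<close>

text \<open>The function g_k(t) = t^k - t^(k+1) on [0,1]: it vanishes at both ends and has a single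
  maximum at the peak k/(k+1).  f_k maps each point to the other point of the same g_k-level.\<close>
definition gfun :: "nat \<Rightarrow> real \<Rightarrow> real" where
  "gfun k t = t ^ k - t ^ (k + 1)"

definition peak :: "nat \<Rightarrow> real" where
  "peak k = real k / (k + 1)"

lemma peak_bounds:
  assumes "k \<ge> 1"
  shows "0 < peak k" "peak k < 1"
  using assms unfolding peak_def by auto

text \<open>The derivative of g_k, factored so that its sign is visible: for x > 0 it is positive
  below the peak and negative above it.\<close>
lemma gfun_deriv:
  assumes "k \<ge> 1"
  shows "(gfun k has_real_derivative x ^ (k - 1) * (real k - real (k + 1) * x)) (at x)"
proof -
  have "(gfun k has_real_derivative real k * x ^ (k - 1) - real (k + 1) * x ^ k) (at x)"
    unfolding gfun_def by (intro derivative_eq_intros) auto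
  moreover have "real k * x ^ (k - 1) - real (k + 1) * x ^ k = x ^ (k - 1) * (real k - real (k + 1) * x)"
    using assms by (cases k) (auto simp: algebra_simps)
  ultimately show ?thesis by simp
qed

lemma gfun_strict_mono_below_peak:
  assumes "k \<ge> 1" "0 \<le> a" "a < b" "b \<le> peak k"
  shows "gfun k a < gfun k b"
proof (rule DERIV_pos_imp_increasing_open[OF assms(3)])
  fix x assume x: "a < x" "x < b"
  then have "x < peak k" using assms(4) by linarith
  then have "x * (k + 1) < k" by (simp add: peak_def field_simps)
  then have "0 < real k - real (k + 1) * x" by (simp add: algebra_simps)
  moreover have "0 < x" using x assms(2) by linarith
  ultimately have "0 < x ^ (k - 1) * (real k - real (k + 1) * x)" by simp
  then show "\<exists>y. (gfun k has_real_derivative y) (at x) \<and> 0 < y"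
    using gfun_deriv[OF assms(1)] by blast
qed (simp add: gfun_def continuous_intros)

lemma gfun_strict_anti_above_peak:
  assumes "k \<ge> 1" "peak k \<le> a" "a < b" "b \<le> 1"
  shows "gfun k b < gfun k a"
proof (rule DERIV_neg_imp_decreasing_open[OF assms(3)])
  fix x assume x: "a < x" "x < b"
  then have "peak k < x" using assms(2) by linarith
  then have "k < x * (k + 1)" by (simp add: peak_def field_simps)
  then have "real k - real (k + 1) * x < 0" by (simp add: algebra_simps)
  moreover have "0 < x" using x assms(2) peak_bounds[OF assms(1)] by linarith
  ultimately have "x ^ (k - 1) * (real k - real (k + 1) * x) < 0"
    by (simp add: mult_pos_neg)
  then show "\<exists>y. (gfun k has_real_derivative y) (at x) \<and> y < 0"
    using gfun_deriv[OF assms(1)] by blast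
qed (simp add: gfun_def continuous_intros)

lemma gfun_le_iff_below_peak:
  assumes "k \<ge> 1" "0 \<le> a" "a \<le> peak k" "0 \<le> b" "b \<le> peak k"
  shows "gfun k a \<le> gfun k b \<longleftrightarrow> a \<le> b"
  using gfun_strict_mono_below_peak[OF assms(1,2) _ assms(5)]
    gfun_strict_mono_below_peak[OF assms(1,4) _ assms(3)]
  by (cases a b rule: linorder_cases) auto

lemma gfun_le_iff_above_peak:
  assumes "k \<ge> 1" "peak k \<le> a" "a \<le> 1" "peak k \<le> b" "b \<le> 1"
  shows "gfun k a \<le> gfun k b \<longleftrightarrow> b \<le> a"
  using gfun_strict_anti_above_peak[OF assms(1,2) _ assms(5)]
    gfun_strict_anti_above_peak[OF assms(1,4) _ assms(3)]
  by (cases a b rule: linorder_cases) auto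

lemma gfun_le_peak:
  assumes "k \<ge> 1" "0 \<le> t" "t \<le> 1"
  shows "gfun k t \<le> gfun k (peak k)"
proof (cases "t \<le> peak k")
  case True
  then show ?thesis using gfun_le_iff_below_peak[OF assms(1), of t "peak k"] assms peak_bounds[OF assms(1)] by simp
next
  case False
  then show ?thesis using gfun_le_iff_above_peak[OF assms(1), of t "peak k"] assms peak_bounds[OF assms(1)] by simp
qed

lemma gfun_nonneg: "0 \<le> t \<Longrightarrow> t \<le> 1 \<Longrightarrow> 0 \<le> gfun k t"
  unfolding gfun_def using mult_right_mono[of t 1 "t ^ k"] by simp

lemma gfun_eq_peak:
  assumes "k \<ge> 1" "0 \<le> t" "t \<le> 1" "gfun k t = gfun k (peak k)"
  shows "t = peak k"
proof (cases "t \<le> peak k")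
  case True
  then show ?thesis using gfun_le_iff_below_peak[OF assms(1), of "peak k" t] assms peak_bounds by simp
next
  case False
  then show ?thesis using gfun_le_iff_above_peak[OF assms(1), of "peak k" t] assms peak_bounds by simp
qed

definition is_fk :: "nat \<Rightarrow> (real \<Rightarrow> real) \<Rightarrow> bool" where
  "is_fk k h \<longleftrightarrow> (\<forall>x\<in>{0..1}. h x \<in> {0..1} \<and> h x ^ k - h x ^ (k+1) = x ^ k - x ^ (k+1))
              \<and> antimono_on {0..1} h \<and> (\<forall>x. x \<notin> {0..1} \<longrightarrow> h x = 0)"

lemma is_fk_swaps_sides:
  assumes k: "k \<ge> 1" and h: "is_fk k h" and x: "0 \<le> x" "x \<le> 1"
  shows "x \<le> peak k \<Longrightarrow> peak k \<le> h x" "peak k \<le> x \<Longrightarrow> h x \<le> peak k"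
proof -
  have range: "0 \<le> h t \<and> h t \<le> 1 \<and> gfun k (h t) = gfun k t" if "0 \<le> t" "t \<le> 1" for t
    using h that unfolding is_fk_def gfun_def by auto
  have anti: "antimono_on {0..1} h" using h unfolding is_fk_def by simp
  have "h (peak k) = peak k"
    using range[of "peak k"] gfun_eq_peak[OF k] peak_bounds[OF k] by auto
  then show "x \<le> peak k \<Longrightarrow> peak k \<le> h x" "peak k \<le> x \<Longrightarrow> h x \<le> peak k"
    using anti x peak_bounds[OF k] unfolding monotone_on_def by (metis atLeastAtMost_iff less_imp_le)+
qed

text \<open>Uniqueness: two such functions agree, because g_k is injective on each side of the peak.\<close>
lemma is_fk_unique:
  assumes k: "k \<ge> 1" and "is_fk k h1" "is_fk k h2"
  shows "h1 = h2"
proof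
  fix x
  show "h1 x = h2 x"
  proof (cases "x \<in> {0..1}")
    case True
    then have x: "0 \<le> x" "x \<le> 1" by auto
    have vals: "0 \<le> h1 x" "h1 x \<le> 1" "0 \<le> h2 x" "h2 x \<le> 1" and
      same: "gfun k (h1 x) = gfun k (h2 x)"
      using assms True unfolding is_fk_def gfun_def by auto
    note side1 = is_fk_swaps_sides[OF k assms(2) x] and side2 = is_fk_swaps_sides[OF k assms(3) x]
    show ?thesis
    proof (cases "x \<le> peak k")
      case True
      then show ?thesis using same vals side1 side2 gfun_le_iff_above_peak[OF k, of "h1 x" "h2 x"]
        gfun_le_iff_above_peak[OF k, of "h2 x" "h1 x"] by auto
    next
      case False
      then show ?thesis using same vals side1 side2 gfun_le_iff_below_peak[OF k, of "h1 x" "h2 x"]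
        gfun_le_iff_below_peak[OF k, of "h2 x" "h1 x"] by auto
    qed
  next
    case False
    then show ?thesis using assms unfolding is_fk_def by auto
  qed
qed

text \<open>Every value of g_k on one side of the peak is attained on the other side (intermediate
  value theorem, using g_k(0) = g_k(1) = 0).\<close>
lemma gfun_mirror_point:
  assumes k: "k \<ge> 1" and x: "0 \<le> x" "x \<le> 1"
  shows "x \<le> peak k \<Longrightarrow> \<exists>y. peak k \<le> y \<and> y \<le> 1 \<and> gfun k y = gfun k x"
    and "peak k \<le> x \<Longrightarrow> \<exists>y. 0 \<le> y \<and> y \<le> peak k \<and> gfun k y = gfun k x"
proof -
  have cont: "continuous_on I (gfun k)" for I unfolding gfun_def by (intro continuous_intros)
  have ends: "gfun k 0 = 0" "gfun k 1 = 0" using k unfolding gfun_def by auto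
  have between: "gfun k 0 \<le> gfun k x" "gfun k 1 \<le> gfun k x" "gfun k x \<le> gfun k (peak k)"
    using ends gfun_nonneg[OF x] gfun_le_peak[OF k x] by auto
  show "x \<le> peak k \<Longrightarrow> \<exists>y. peak k \<le> y \<and> y \<le> 1 \<and> gfun k y = gfun k x"
    using IVT2'[of "gfun k" 1 "gfun k x" "peak k", OF between(2,3)] peak_bounds[OF k] cont by auto
  show "peak k \<le> x \<Longrightarrow> \<exists>y. 0 \<le> y \<and> y \<le> peak k \<and> gfun k y = gfun k x"
    using IVT'[of "gfun k" 0 "gfun k x" "peak k", OF between(1,3)] peak_bounds[OF k] cont by auto
qed

text \<open>Existence: reflect each point across the peak to the other point of the same g_k-level.\<close>
lemma is_fk_exists:
  assumes k: "k \<ge> 1"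
  shows "\<exists>h. is_fk k h"
proof -
  define r where "r x = (if x \<notin> {0..1} then 0
      else if x \<le> peak k then (SOME y. peak k \<le> y \<and> y \<le> 1 \<and> gfun k y = gfun k x)
      else (SOME y. 0 \<le> y \<and> y \<le> peak k \<and> gfun k y = gfun k x))" for x
  have r_below: "peak k \<le> r x \<and> r x \<le> 1 \<and> gfun k (r x) = gfun k x"
    if "0 \<le> x" "x \<le> peak k" for x
    using someI_ex[OF gfun_mirror_point(1)[OF k]] that peak_bounds[OF k] unfolding r_def by auto
  have r_above: "0 \<le> r x \<and> r x \<le> peak k \<and> gfun k (r x) = gfun k x"
    if "peak k < x" "x \<le> 1" for x
    using someI_ex[OF gfun_mirror_point(2)[OF k]] that peak_bounds[OF k] unfolding r_def by auto
  have "antimono_on {0..1} r"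
  proof (rule monotone_onI)
    fix a b :: real assume ab: "a \<in> {0..1}" "b \<in> {0..1}" "a \<le> b"
    consider "b \<le> peak k" | "a \<le> peak k" "peak k < b" | "peak k < a" by linarith
    then show "r b \<le> r a"
    proof cases
      case 1
      then have "gfun k a \<le> gfun k b" using gfun_le_iff_below_peak[OF k, of a b] ab by auto
      then show ?thesis using r_below[of a] r_below[of b] ab 1
          gfun_le_iff_above_peak[OF k, of "r a" "r b"] by auto
    next
      case 2
      then show ?thesis using r_below[of a] r_above[of b] ab by auto
    next
      case 3
      then have "gfun k b \<le> gfun k a" using gfun_le_iff_above_peak[OF k, of b a] ab by auto
      then show ?thesis using r_above[of a] r_above[of b] ab 3
          gfun_le_iff_below_peak[OF k, of "r b" "r a"] by auto
    qed
  qed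
  moreover have "r x \<in> {0..1} \<and> r x ^ k - r x ^ (k + 1) = x ^ k - x ^ (k + 1)" if "x \<in> {0..1}" for x
    using r_below[of x] r_above[of x] that peak_bounds[OF k] unfolding gfun_def
    by (cases "x \<le> peak k") auto
  ultimately have "is_fk k r" unfolding is_fk_def r_def by auto
  then show ?thesis by blast
qed

lemma fk_is_fk:
  assumes k: "k \<ge> 1"
  shows "is_fk k (fk k)"
proof -
  have "\<exists>!h. is_fk k h" using is_fk_exists[OF k] is_fk_unique[OF k] by blast
  then have "is_fk k (THE h. is_fk k h)" by (rule theI')
  moreover have "fk k = (THE h. is_fk k h)" unfolding fk_def is_fk_def ..
  ultimately show ?thesis by simp
qed

lemma fk_basic:
  assumes k: "k \<ge> 1" and q: "0 \<le> q" "q \<le> 1"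
  shows "0 \<le> fk k q" "fk k q \<le> 1" "gfun k (fk k q) = gfun k q"
    and "q \<le> peak k \<Longrightarrow> peak k \<le> fk k q" "peak k \<le> q \<Longrightarrow> fk k q \<le> peak k"
  using fk_is_fk[OF k] is_fk_swaps_sides[OF k fk_is_fk[OF k] q] q
  unfolding is_fk_def gfun_def by auto

lemma fk_antitone:
  assumes k: "k \<ge> 1" and "0 \<le> q1" "q1 \<le> q2" "q2 \<le> 1"
  shows "fk k q2 \<le> fk k q1"
  using fk_is_fk[OF k] assms unfolding is_fk_def monotone_on_def by auto

text \<open>The complete homogeneous polynomial h_{n-1}(y, q) = y^{n-1} + y^{n-2} q + ... + q^{n-1},
  i.e. (y^n - q^n) / (y - q); it turns the implicit equation for f_k into a usable identity.\<close>
definition hom_sum :: "real \<Rightarrow> real \<Rightarrow> nat \<Rightarrow> real" where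
  "hom_sum y q n = (\<Sum>i<n. y ^ i * q ^ (n - 1 - i))"

lemma hom_sum_0 [simp]: "hom_sum y q 0 = 0"
  unfolding hom_sum_def by simp

lemma hom_sum_Suc_left: "hom_sum y q (Suc n) = q ^ n + y * hom_sum y q n"
proof -
  have "hom_sum y q (Suc n) = q ^ n + (\<Sum>i<n. y ^ Suc i * q ^ (n - Suc i))"
    unfolding hom_sum_def sum.lessThan_Suc_shift by simp
  also have "(\<Sum>i<n. y ^ Suc i * q ^ (n - Suc i)) = y * hom_sum y q n"
    unfolding hom_sum_def sum_distrib_left by (rule sum.cong) auto
  finally show ?thesis .
qed

lemma hom_sum_split: "hom_sum y q (a + b) = y ^ a * hom_sum y q b + q ^ b * hom_sum y q a"
proof (induction a)
  case (Suc a)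
  have "hom_sum y q (Suc a + b) = q ^ (a + b) + y * (y ^ a * hom_sum y q b + q ^ b * hom_sum y q a)"
    using Suc by (simp add: hom_sum_Suc_left)
  also have "\<dots> = y ^ Suc a * hom_sum y q b + q ^ b * (q ^ a + y * hom_sum y q a)"
    by (simp add: algebra_simps power_add)
  finally show ?case by (simp add: hom_sum_Suc_left)
qed simp

lemma hom_sum_Suc_right: "hom_sum y q (Suc n) = y ^ n + q * hom_sum y q n"
  using hom_sum_split[of y q n 1] by (simp add: hom_sum_def)

lemma hom_sum_diff: "(y - q) * hom_sum y q n = y ^ n - q ^ n"
proof (induction n)
  case (Suc n)
  have "(y - q) * hom_sum y q (Suc n) = (y - q) * q ^ n + y * ((y - q) * hom_sum y q n)"
    by (simp add: hom_sum_Suc_left algebra_simps)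
  also have "\<dots> = (y - q) * q ^ n + y * (y ^ n - q ^ n)" using Suc by simp
  finally show ?case by (simp add: algebra_simps)
qed simp

lemma hom_sum_diag: "c * hom_sum c c n = real n * c ^ n"
proof (induction n)
  case (Suc n)
  have "c * hom_sum c c (Suc n) = c * c ^ n + c * (c * hom_sum c c n)"
    by (simp add: hom_sum_Suc_left algebra_simps)
  also have "\<dots> = c * c ^ n + c * (real n * c ^ n)" using Suc by simp
  finally show ?case by (simp add: algebra_simps)
qed simp

lemma hom_sum_nonneg: "0 \<le> y \<Longrightarrow> 0 \<le> q \<Longrightarrow> 0 \<le> hom_sum y q n"
  unfolding hom_sum_def by (intro sum_nonneg) auto

lemma hom_sum_pos:
  assumes "n \<ge> 1" "0 \<le> y" "0 \<le> q" "0 < y \<or> 0 < q"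
  shows "0 < hom_sum y q n"
proof -
  obtain m where m: "n = Suc m" using assms(1) by (cases n) auto
  have "0 \<le> y * hom_sum y q m" "0 \<le> q * hom_sum y q m"
    using hom_sum_nonneg[OF assms(2,3), of m] assms(2,3) by simp_all
  then have "q ^ m \<le> hom_sum y q n" "y ^ m \<le> hom_sum y q n"
    using hom_sum_Suc_left[of y q m] hom_sum_Suc_right[of y q m] unfolding m by linarith+
  then show ?thesis using assms by (meson less_le_trans zero_less_power)
qed

text \<open>The key identity: y = f_k(q) satisfies y^k = (1 - q) h_{k-1}(y, q).  Off the diagonal it is
  g_k(y) = g_k(q) divided by y - q; on the diagonal y = q is the peak k/(k+1).\<close>
lemma fk_power_identity:
  assumes k: "k \<ge> 1" and q: "0 \<le> q" "q \<le> 1"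
  shows "fk k q ^ k = (1 - q) * hom_sum (fk k q) q k"
proof -
  define y where "y = fk k q"
  note fk = fk_basic[OF k q, folded y_def]
  have "y ^ k = (1 - q) * hom_sum y q k"
  proof (cases "y = q")
    case False
    have "(y - q) * (y ^ k - (1 - q) * hom_sum y q k) = (y - q) * y ^ k - (1 - q) * (y ^ k - q ^ k)"
      by (simp add: algebra_simps flip: hom_sum_diff)
    also have "\<dots> = 0" using fk(3) by (simp add: gfun_def algebra_simps)
    finally show ?thesis using False by simp
  next
    case True
    then have yc: "y = peak k" using fk peak_bounds[OF k] by (cases "q \<le> peak k") auto
    have "(1 - peak k) * real k = peak k" unfolding peak_def by (simp add: field_simps)
    then have "peak k * ((1 - peak k) * hom_sum (peak k) (peak k) k) = peak k * peak k ^ k"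
      using hom_sum_diag[of "peak k" k] by (metis mult.assoc mult.left_commute)
    then show ?thesis using True yc peak_bounds[OF k] by simp
  qed
  then show ?thesis unfolding y_def .
qed

text \<open>f_k(q) and q cannot both vanish (f_k(0) = 1); this keeps the denominators below positive.\<close>
lemma fk_pos_or_pos:
  assumes k: "k \<ge> 1" and q: "0 \<le> q" "q \<le> 1"
  shows "0 < fk k q \<or> 0 < q"
  using fk_basic[OF k q] peak_bounds[OF k] by (cases "q \<le> peak k") auto

lemma hom_sum_fk_pos:
  assumes "k \<ge> 1" "0 \<le> q" "q \<le> 1"
  shows "0 < hom_sum (fk k q) q k"
  using hom_sum_pos[OF assms(1)] fk_basic[OF assms] fk_pos_or_pos[OF assms] assms(2) by blast

text \<open>The weight of a current run of s misses when the next miss probability is q.  With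
  y = f_k(q) it satisfies W(0) = 1, W(s) = 0 for s \<ge> k and y W(s) = (1 - q) + q W(s+1): the
  expected weight after one more independent trial is y times the current one.\<close>
definition weight :: "nat \<Rightarrow> real \<Rightarrow> nat \<Rightarrow> real" where
  "weight k q s = fk k q ^ s * hom_sum (fk k q) q (k - s) / hom_sum (fk k q) q k"

lemma weight_0: "k \<ge> 1 \<Longrightarrow> 0 \<le> q \<Longrightarrow> q \<le> 1 \<Longrightarrow> weight k q 0 = 1"
  unfolding weight_def using hom_sum_fk_pos[of k q] by simp

lemma weight_vanishes: "k \<le> s \<Longrightarrow> weight k q s = 0"
  unfolding weight_def by simp

text \<open>The weights lie in [0,1]; the upper bound is the splitting h(k) = y^s h(k-s) + q^(k-s) h(s).\<close>
lemma weight_bounds: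
  assumes "k \<ge> 1" "0 \<le> q" "q \<le> 1"
  shows "0 \<le> weight k q s" "weight k q s \<le> 1"
proof -
  define y where "y = fk k q"
  have y: "0 \<le> y" using fk_basic[OF assms] y_def by simp
  have D: "0 < hom_sum y q k" using hom_sum_fk_pos[OF assms] y_def by simp
  show "0 \<le> weight k q s" unfolding weight_def y_def[symmetric]
    using D y hom_sum_nonneg[OF y assms(2)] by simp
  show "weight k q s \<le> 1"
  proof (cases "s \<le> k")
    case True
    have "hom_sum y q k = y ^ s * hom_sum y q (k - s) + q ^ (k - s) * hom_sum y q s"
      using hom_sum_split[of y q s "k - s"] True by simp
    moreover have "0 \<le> q ^ (k - s) * hom_sum y q s" using hom_sum_nonneg[OF y assms(2)] assms by simp
    ultimately have "y ^ s * hom_sum y q (k - s) \<le> hom_sum y q k" by simp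
    then show ?thesis unfolding weight_def y_def[symmetric] using D by simp
  qed (simp add: weight_vanishes)
qed

text \<open>The one-step relation y W(s) = (1 - q) + q W(s+1) for s < k, from y^k = (1 - q) h(y, q).\<close>
lemma weight_step:
  assumes k: "k \<ge> 1" and q: "0 \<le> q" "q \<le> 1" and s: "s < k"
  shows "fk k q * weight k q s = (1 - q) + q * weight k q (Suc s)"
proof -
  define y where "y = fk k q"
  define D where "D = hom_sum y q k"
  define m where "m = k - Suc s"
  have D: "0 < D" using hom_sum_fk_pos[OF k q] y_def D_def by simp
  have km: "k - s = Suc m" "Suc s + m = k" using s m_def by auto
  have "y * (y ^ s * hom_sum y q (k - s)) = y ^ (Suc s + m) + q * (y ^ Suc s * hom_sum y q m)"
    unfolding km(1) hom_sum_Suc_right by (simp add: algebra_simps power_add)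
  also have "\<dots> = (1 - q) * D + q * (y ^ Suc s * hom_sum y q m)"
    using fk_power_identity[OF k q] km(2) unfolding y_def D_def by simp
  finally have "y * (y ^ s * hom_sum y q (k - s)) / D = (1 - q) + q * (y ^ Suc s * hom_sum y q m / D)"
    using D by (simp add: field_simps)
  then show ?thesis unfolding weight_def y_def[symmetric] D_def[symmetric] m_def by simp
qed

text \<open>A termwise comparison of monomials behind the monotonicity of the weights in q.\<close>
lemma monomial_cross_le:
  fixes y1 y2 q1 q2 :: real
  assumes nn: "0 \<le> y1" "0 \<le> y2" "0 \<le> q1" "0 \<le> q2" and yq: "y2 * q1 \<le> y1 * q2"
    and ij: "i < a" "j < s"
  shows "(y2 ^ s * (y2 ^ i * q2 ^ (a - 1 - i))) * (q1 ^ a * (y1 ^ j * q1 ^ (s - 1 - j)))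
       \<le> (y1 ^ s * (y1 ^ i * q1 ^ (a - 1 - i))) * (q2 ^ a * (y2 ^ j * q2 ^ (s - 1 - j)))"
proof -
  define d where "d = s + i - j"
  define e where "e = a - 1 - i"
  define X where "X = y1 ^ j * y2 ^ j * q1 ^ e * q2 ^ e"
  have h1: "s + i = j + d" and h2: "a + (s - 1 - j) = e + d" using ij unfolding d_def e_def by auto
  have "(y2 ^ s * (y2 ^ i * q2 ^ (a - 1 - i))) * (q1 ^ a * (y1 ^ j * q1 ^ (s - 1 - j)))
      = y2 ^ (s + i) * q1 ^ (a + (s - 1 - j)) * q2 ^ e * y1 ^ j"
    unfolding e_def by (simp add: power_add mult_ac)
  also have "\<dots> = X * (y2 * q1) ^ d"
    unfolding h1 h2 X_def by (simp add: power_add power_mult_distrib mult_ac)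
  finally have L: "(y2 ^ s * (y2 ^ i * q2 ^ (a - 1 - i))) * (q1 ^ a * (y1 ^ j * q1 ^ (s - 1 - j)))
      = X * (y2 * q1) ^ d" .
  have "(y1 ^ s * (y1 ^ i * q1 ^ (a - 1 - i))) * (q2 ^ a * (y2 ^ j * q2 ^ (s - 1 - j)))
      = y1 ^ (s + i) * q2 ^ (a + (s - 1 - j)) * q1 ^ e * y2 ^ j"
    unfolding e_def by (simp add: power_add mult_ac)
  also have "\<dots> = X * (y1 * q2) ^ d"
    unfolding h1 h2 X_def by (simp add: power_add power_mult_distrib mult_ac)
  finally have R: "(y1 ^ s * (y1 ^ i * q1 ^ (a - 1 - i))) * (q2 ^ a * (y2 ^ j * q2 ^ (s - 1 - j)))
      = X * (y1 * q2) ^ d" .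
  have "(y2 * q1) ^ d \<le> (y1 * q2) ^ d" using yq nn by (intro power_mono) auto
  moreover have "0 \<le> X" unfolding X_def using nn by simp
  ultimately show ?thesis unfolding L R by (rule mult_left_mono)
qed

lemma hom_sum_cross_le:
  fixes y1 y2 q1 q2 :: real
  assumes "0 \<le> y1" "0 \<le> y2" "0 \<le> q1" "0 \<le> q2" "y2 * q1 \<le> y1 * q2"
  shows "(y2 ^ s * hom_sum y2 q2 a) * (q1 ^ a * hom_sum y1 q1 s)
       \<le> (y1 ^ s * hom_sum y1 q1 a) * (q2 ^ a * hom_sum y2 q2 s)"
proof -
  have "(y2 ^ s * hom_sum y2 q2 a) * (q1 ^ a * hom_sum y1 q1 s)
     = (\<Sum>i<a. \<Sum>j<s. (y2 ^ s * (y2 ^ i * q2 ^ (a - 1 - i))) * (q1 ^ a * (y1 ^ j * q1 ^ (s - 1 - j))))"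
    unfolding hom_sum_def sum_distrib_left[of "y2 ^ s"] sum_distrib_left[of "q1 ^ a"] sum_product ..
  also have "\<dots> \<le> (\<Sum>i<a. \<Sum>j<s. (y1 ^ s * (y1 ^ i * q1 ^ (a - 1 - i))) * (q2 ^ a * (y2 ^ j * q2 ^ (s - 1 - j))))"
    by (intro sum_mono monomial_cross_le[OF assms]) auto
  also have "\<dots> = (y1 ^ s * hom_sum y1 q1 a) * (q2 ^ a * hom_sum y2 q2 s)"
    unfolding hom_sum_def sum_distrib_left[of "y1 ^ s"] sum_distrib_left[of "q2 ^ a"] sum_product ..
  finally show ?thesis .
qed

text \<open>The weights decrease as the miss probability q grows: writing h(k) = N + B with
  N = y^s h(k-s) and B = q^(k-s) h(s), the claim N2/(N2+B2) \<le> N1/(N1+B1) is the cross inequality.\<close>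
lemma weight_antitone:
  assumes k: "k \<ge> 1" and q: "0 \<le> q1" "q1 \<le> q2" "q2 \<le> 1"
  shows "weight k q2 s \<le> weight k q1 s"
proof (cases "s \<le> k")
  case True
  define y1 where "y1 = fk k q1"
  define y2 where "y2 = fk k q2"
  define a where "a = k - s"
  have p1: "0 \<le> y1" "y1 \<le> 1" using fk_basic[OF k, of q1] q y1_def by auto
  have p2: "0 \<le> y2" using fk_basic[OF k, of q2] q y2_def by auto
  have "y2 \<le> y1" using fk_antitone[OF k q] y1_def y2_def by simp
  then have yq: "y2 * q1 \<le> y1 * q2" using q p1 p2 by (meson mult_mono)
  define N1 where "N1 = y1 ^ s * hom_sum y1 q1 a"
  define N2 where "N2 = y2 ^ s * hom_sum y2 q2 a"
  define B1 where "B1 = q1 ^ a * hom_sum y1 q1 s"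
  define B2 where "B2 = q2 ^ a * hom_sum y2 q2 s"
  have D1: "hom_sum y1 q1 k = N1 + B1" and D2: "hom_sum y2 q2 k = N2 + B2"
    unfolding N1_def B1_def N2_def B2_def a_def
    using hom_sum_split[of _ _ s "k - s"] True by simp_all
  have P1: "0 < N1 + B1" using hom_sum_fk_pos[OF k, of q1] q D1 y1_def by simp
  have P2: "0 < N2 + B2" using hom_sum_fk_pos[OF k, of q2] q D2 y2_def by simp
  have "N2 * B1 \<le> N1 * B2" unfolding N1_def N2_def B1_def B2_def
    using hom_sum_cross_le[OF p1(1) p2(1) _ _ yq, of s a] q by simp
  then have "N2 / (N2 + B2) \<le> N1 / (N1 + B1)"
    using P1 P2 by (simp add: divide_simps algebra_simps)
  then show ?thesis unfolding weight_def y1_def[symmetric] y2_def[symmetric] a_def[symmetric] D1 D2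
    N1_def[symmetric] N2_def[symmetric] .
qed (simp add: weight_vanishes)

fun trailing_misses :: "(nat \<Rightarrow> bool) \<Rightarrow> nat \<Rightarrow> nat" where
  "trailing_misses b 0 = 0"
| "trailing_misses b (Suc m) = (if b (Suc m) then 0 else Suc (trailing_misses b m))"

fun no_gap :: "nat \<Rightarrow> (nat \<Rightarrow> bool) \<Rightarrow> nat \<Rightarrow> bool" where
  "no_gap k b 0 = True"
| "no_gap k b (Suc m) = (no_gap k b m \<and> trailing_misses b (Suc m) < k)"

lemma trailing_misses_ge_iff:
  "r \<le> trailing_misses b m \<longleftrightarrow> r \<le> m \<and> (\<forall>j. m - r < j \<and> j \<le> m \<longrightarrow> \<not> b j)"
proof (induction m arbitrary: r)
  case (Suc m)
  show ?case
  proof (cases "b (Suc m)")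
    case hit: True
    have "r \<le> Suc m \<and> (\<forall>j. Suc m - r < j \<and> j \<le> Suc m \<longrightarrow> \<not> b j) \<Longrightarrow> r = 0"
      using hit by (cases r) force+
    then show ?thesis using hit by auto
  next
    case miss: False
    show ?thesis
    proof (cases r)
      case (Suc r')
      then show ?thesis using miss Suc.IH[of r'] by (auto simp: le_Suc_eq)
    qed auto
  qed
qed simp

lemma no_gap_iff: "no_gap k b m \<longleftrightarrow> (\<forall>m'. 1 \<le> m' \<and> m' \<le> m \<longrightarrow> trailing_misses b m' < k)"
  by (induction m) (auto simp: le_Suc_eq)

lemma no_gap_trailing_misses_less: "k \<ge> 1 \<Longrightarrow> no_gap k b m \<Longrightarrow> trailing_misses b m < k"
  by (cases m) auto

lemma has_k_gap_iff_not_no_gap: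
  assumes "k \<ge> 1"
  shows "has_k_gap k n A w \<longleftrightarrow> \<not> no_gap k (\<lambda>i. w \<in> A i) n"
proof -
  have "has_k_gap k n A w \<longleftrightarrow> (\<exists>m. 1 \<le> m \<and> m \<le> n \<and> k \<le> trailing_misses (\<lambda>i. w \<in> A i) m)"
    unfolding has_k_gap_def trailing_misses_ge_iff
  proof
    assume "\<exists>i\<ge>1. i + k - 1 \<le> n \<and> (\<forall>j\<in>{i..i + k - 1}. w \<notin> A j)"
    then obtain i where "i \<ge> 1" "i + k - 1 \<le> n" "\<forall>j\<in>{i..i + k - 1}. w \<notin> A j" by auto
    then show "\<exists>m\<ge>1. m \<le> n \<and> k \<le> m \<and> (\<forall>j. m - k < j \<and> j \<le> m \<longrightarrow> w \<notin> A j)"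
      using assms by (intro exI[of _ "i + k - 1"]) auto
  next
    assume "\<exists>m\<ge>1. m \<le> n \<and> k \<le> m \<and> (\<forall>j. m - k < j \<and> j \<le> m \<longrightarrow> w \<notin> A j)"
    then obtain m where "m \<ge> 1" "m \<le> n" "k \<le> m" "\<forall>j. m - k < j \<and> j \<le> m \<longrightarrow> w \<notin> A j" by auto
    then show "\<exists>i\<ge>1. i + k - 1 \<le> n \<and> (\<forall>j\<in>{i..i + k - 1}. w \<notin> A j)"
      using assms by (intro exI[of _ "m - k + 1"]) auto
  qed
  then show ?thesis unfolding no_gap_iff by (auto simp: not_less)
qed

lemma has_k_gap_cong:
  "(\<And>i. i \<in> {1..n} \<Longrightarrow> B i = A i) \<Longrightarrow> has_k_gap k n B w \<longleftrightarrow> has_k_gap k n A w"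
  unfolding has_k_gap_def by (intro ex_cong conj_cong ball_cong refl) auto

lemma has_k_gap_reverse_imp:
  assumes "k \<ge> 1" "has_k_gap k n A w"
  shows "has_k_gap k n (\<lambda>i. A (n + 1 - i)) w"
proof -
  obtain i where i: "i \<ge> 1" "i + k - 1 \<le> n" "\<forall>j\<in>{i..i + k - 1}. w \<notin> A j"
    using assms(2) unfolding has_k_gap_def by auto
  have "w \<notin> A (n + 1 - j)" if "j \<in> {n + 2 - i - k..n + 1 - i}" for j
  proof -
    have "n + 1 - j \<in> {i..i + k - 1}" using that i(1,2) assms(1) by auto
    then show ?thesis using i(3) by blast
  qed
  then show ?thesis
    unfolding has_k_gap_def using i assms(1) by (intro exI[of _ "n + 2 - i - k"]) auto
qed

lemma has_k_gap_reverse: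
  assumes "k \<ge> 1"
  shows "has_k_gap k n (\<lambda>i. A (n + 1 - i)) w \<longleftrightarrow> has_k_gap k n A w"
proof
  assume "has_k_gap k n (\<lambda>i. A (n + 1 - i)) w"
  then have "has_k_gap k n (\<lambda>i. A (n + 1 - (n + 1 - i))) w"
    by (rule has_k_gap_reverse_imp[OF assms])
  then show "has_k_gap k n A w" by (subst (asm) has_k_gap_cong[of n _ A]) auto
qed (rule has_k_gap_reverse_imp[OF assms])

lemma (in prob_space) indep_events_reindex:
  assumes f: "bij_betw f J I" and ind: "indep_events A I"
  shows "indep_events (\<lambda>j. A (f j)) J"
proof (rule indep_eventsI)
  fix j assume "j \<in> J"
  then show "A (f j) \<in> events" using ind f unfolding indep_events_def bij_betw_def by auto
next
  fix K assume K: "K \<subseteq> J" "finite K" "K \<noteq> {}"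
  have inj: "inj_on f K" using f K(1) unfolding bij_betw_def by (auto intro: inj_on_subset)
  have "f ` K \<subseteq> I" "f ` K \<noteq> {}" "finite (f ` K)" using f K unfolding bij_betw_def by auto
  then have "prob (\<Inter>i\<in>f ` K. A i) = (\<Prod>i\<in>f ` K. prob (A i))"
    using ind unfolding indep_events_def by blast
  then show "prob (\<Inter>j\<in>K. A (f j)) = (\<Prod>j\<in>K. prob (A (f j)))"
    using prod.reindex[OF inj, of "\<lambda>i. prob (A i)"] by simp
qed

lemma bij_betw_reverse: "bij_betw (\<lambda>i. n + 1 - i) {1..n} {1..n :: nat}"
  by (rule bij_betwI[of _ _ _ "\<lambda>i. n + 1 - i"]) auto

definition no_gap_event :: "'a set \<Rightarrow> nat \<Rightarrow> (nat \<Rightarrow> 'a set) \<Rightarrow> nat \<Rightarrow> 'a set" where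
  "no_gap_event \<Omega> k A m = {w \<in> \<Omega>. no_gap k (\<lambda>i. w \<in> A i) m}"

definition run_event :: "'a set \<Rightarrow> nat \<Rightarrow> (nat \<Rightarrow> 'a set) \<Rightarrow> nat \<Rightarrow> nat \<Rightarrow> 'a set" where
  "run_event \<Omega> k A m s = {w \<in> \<Omega>. no_gap k (\<lambda>i. w \<in> A i) m \<and> trailing_misses (\<lambda>i. w \<in> A i) m = s}"

lemma no_gap_event_eq:
  "k \<ge> 1 \<Longrightarrow> {w \<in> \<Omega>. \<not> has_k_gap k n A w} = no_gap_event \<Omega> k A n"
  unfolding no_gap_event_def by (simp add: has_k_gap_iff_not_no_gap)

lemma no_gap_event_eq_Union:
  "k \<ge> 1 \<Longrightarrow> no_gap_event \<Omega> k A m = (\<Union>s<k. run_event \<Omega> k A m s)"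
  unfolding no_gap_event_def run_event_def using no_gap_trailing_misses_less by fastforce

lemma run_event_0: "run_event \<Omega> k A 0 s = (if s = 0 then \<Omega> else {})"
  unfolding run_event_def by auto

lemma run_event_Suc_hit:
  "k \<ge> 1 \<Longrightarrow> run_event \<Omega> k A (Suc m) 0 = no_gap_event \<Omega> k A m \<inter> A (Suc m)"
  unfolding run_event_def no_gap_event_def by auto

lemma run_event_Suc_miss:
  "run_event \<Omega> k A (Suc m) (Suc s) = (if Suc s < k then run_event \<Omega> k A m s - A (Suc m) else {})"
  unfolding run_event_def by auto

lemma run_event_in_sigma:
  assumes k: "k \<ge> 1" and A: "A ` {1..m} \<subseteq> Pow \<Omega>"
  shows "run_event \<Omega> k A m s \<in> sigma_sets \<Omega> (A ` {1..m})"
    and "no_gap_event \<Omega> k A m \<in> sigma_sets \<Omega> (A ` {1..m})"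
proof -
  have runs: "\<forall>s. run_event \<Omega> k A m s \<in> sigma_sets \<Omega> (A ` {1..m})" using A
  proof (induction m)
    case 0
    show ?case by (simp add: run_event_0 sigma_sets_top sigma_sets.Empty)
  next
    case (Suc m)
    let ?\<Sigma> = "sigma_sets \<Omega> (A ` {1..Suc m})"
    interpret \<Sigma>: sigma_algebra \<Omega> ?\<Sigma>
      using Suc.prems by (intro sigma_algebra_sigma_sets) auto
    have le: "sigma_sets \<Omega> (A ` {1..m}) \<subseteq> ?\<Sigma>" by (intro sigma_sets_mono') auto
    have "A ` {1..m} \<subseteq> A ` {1..Suc m}" by auto
    then have "A ` {1..m} \<subseteq> Pow \<Omega>" using Suc.prems by blast
    then have prev: "run_event \<Omega> k A m s \<in> ?\<Sigma>" for s using Suc.IH le by auto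
    have new: "A (Suc m) \<in> ?\<Sigma>" by (intro sigma_sets.Basic) auto
    have "no_gap_event \<Omega> k A m \<in> ?\<Sigma>"
      unfolding no_gap_event_eq_Union[OF k] using prev by (intro \<Sigma>.finite_UN) auto
    then have "run_event \<Omega> k A (Suc m) 0 \<in> ?\<Sigma>"
      unfolding run_event_Suc_hit[OF k] using new by (rule \<Sigma>.Int)
    moreover have "run_event \<Omega> k A (Suc m) (Suc s) \<in> ?\<Sigma>" for s
    proof (cases "Suc s < k")
      case True
      have "run_event \<Omega> k A m s - A (Suc m) \<in> ?\<Sigma>" using prev new by (rule \<Sigma>.Diff)
      with True show ?thesis by (simp only: run_event_Suc_miss if_True)
    next
      case False
      show ?thesis using False \<Sigma>.empty_sets by (simp only: run_event_Suc_miss if_False)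
    qed
    ultimately show ?case by (metis not0_implies_Suc)
  qed
  then show "run_event \<Omega> k A m s \<in> sigma_sets \<Omega> (A ` {1..m})" by blast
  show "no_gap_event \<Omega> k A m \<in> sigma_sets \<Omega> (A ` {1..m})"
    unfolding no_gap_event_eq_Union[OF k]
    using runs sigma_sets_UNION[of "run_event \<Omega> k A m ` {..<k}"] by auto
qed

context prob_space
begin

lemma indep_events_sigma_Int:
  assumes ind: "indep_events A I" and J: "J \<subseteq> I" "j \<in> I" "j \<notin> J"
    and B: "B \<in> sigma_sets (space M) (A ` J)"
  shows "prob (B \<inter> A j) = prob B * prob (A j)"
proof -
  define Ix where "Ix b = (if b then J else {j})" for b :: bool
  have "indep_sets (\<lambda>i. {A i}) (\<Union>b\<in>UNIV. Ix b)"
    using ind unfolding indep_events_def_alt by (rule indep_sets_mono_index[rotated]) (auto simp: Ix_def J)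
  then have "indep_sets (\<lambda>b. sigma_sets (space M) (\<Union>i\<in>Ix b. {A i})) UNIV"
    by (rule indep_sets_collect_sigma) (auto simp: Int_stable_def disjoint_family_on_def Ix_def J)
  then have "prob (\<Inter>b\<in>UNIV. (if b then B else A j)) = (\<Prod>b\<in>UNIV. prob (if b then B else A j))"
    by (rule indep_setsD) (auto simp: Ix_def B UNION_singleton_eq_range)
  then show ?thesis by (simp add: UNIV_bool Int_commute)
qed

definition run_prob :: "nat \<Rightarrow> (nat \<Rightarrow> 'a set) \<Rightarrow> nat \<Rightarrow> nat \<Rightarrow> real" where
  "run_prob k A m s = prob (run_event (space M) k A m s)"

lemma events_in_Pow_space: "A ` I \<subseteq> events \<Longrightarrow> A ` I \<subseteq> Pow (space M)"
  using sets.sets_into_space by auto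

lemma run_event_in_events:
  assumes "k \<ge> 1" "A ` {1..m} \<subseteq> events"
  shows "run_event (space M) k A m s \<in> events" "no_gap_event (space M) k A m \<in> events"
  using run_event_in_sigma[OF assms(1) events_in_Pow_space[OF assms(2)]]
    sets.sigma_sets_subset[OF assms(2)] by blast+

lemma prob_no_gap_event:
  assumes k: "k \<ge> 1" and A: "A ` {1..m} \<subseteq> events"
  shows "prob (no_gap_event (space M) k A m) = (\<Sum>s<k. run_prob k A m s)"
  unfolding no_gap_event_eq_Union[OF k] run_prob_def
  by (rule finite_measure_finite_Union)
     (use run_event_in_events[OF k A] in \<open>auto simp: disjoint_family_on_def run_event_def\<close>)

lemma run_prob_Suc_hit:
  assumes k: "k \<ge> 1" and ind: "indep_events A {1..n}" and m: "Suc m \<le> n"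
  shows "run_prob k A (Suc m) 0 = prob (A (Suc m)) * (\<Sum>s<k. run_prob k A m s)"
proof -
  have A: "A ` {1..m} \<subseteq> events" using ind m unfolding indep_events_def by auto
  have "run_prob k A (Suc m) 0 = prob (no_gap_event (space M) k A m \<inter> A (Suc m))"
    unfolding run_prob_def run_event_Suc_hit[OF k] ..
  also have "\<dots> = prob (no_gap_event (space M) k A m) * prob (A (Suc m))"
    using run_event_in_sigma(2)[OF k events_in_Pow_space[OF A]] m
    by (intro indep_events_sigma_Int[OF ind, of "{1..m}"]) auto
  finally show ?thesis unfolding prob_no_gap_event[OF k A] by (simp add: mult.commute)
qed

lemma run_prob_Suc_miss:
  assumes k: "k \<ge> 1" and ind: "indep_events A {1..n}" and m: "Suc m \<le> n" and s: "Suc s < k"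
  shows "run_prob k A (Suc m) (Suc s) = (1 - prob (A (Suc m))) * run_prob k A m s"
proof -
  let ?B = "run_event (space M) k A m s"
  have A: "A ` {1..m} \<subseteq> events" and ev: "A (Suc m) \<in> events"
    using ind m unfolding indep_events_def by auto
  have B: "?B \<in> sigma_sets (space M) (A ` {1..m})"
    using run_event_in_sigma(1)[OF k events_in_Pow_space[OF A]] .
  have "prob (?B \<inter> A (Suc m)) = prob ?B * prob (A (Suc m))"
    using m by (intro indep_events_sigma_Int[OF ind _ _ _ B]) auto
  moreover have "prob (?B - A (Suc m)) = prob ?B - prob (?B \<inter> A (Suc m))"
    using run_event_in_events(1)[OF k A] ev by (subst finite_measure_Diff') auto
  ultimately show ?thesis
    unfolding run_prob_def run_event_Suc_miss using s by (simp add: algebra_simps)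
qed

definition potential :: "nat \<Rightarrow> (nat \<Rightarrow> 'a set) \<Rightarrow> nat \<Rightarrow> real \<Rightarrow> real" where
  "potential k A m q = (\<Sum>s<k. run_prob k A m s * weight k q s)"

lemma potential_start:
  assumes "k \<ge> 1" "0 \<le> q" "q \<le> 1"
  shows "potential k A 0 q = 1"
proof -
  obtain k' where k': "k = Suc k'" using assms(1) by (cases k) auto
  show ?thesis
    unfolding potential_def run_prob_def run_event_0 k' sum.lessThan_Suc_shift
    using weight_0[OF assms] by (simp add: prob_space k')
qed

text \<open>Each further trial multiplies the potential exactly by f_k(q), q its miss probability:
  this is the one-step relation of the weights averaged over the run length.\<close>
lemma potential_step:
  assumes k: "k \<ge> 1" and ind: "indep_events A {1..n}" and m: "Suc m \<le> n"
    and q: "q = 1 - prob (A (Suc m))"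
  shows "fk k q * potential k A m q = potential k A (Suc m) q"
proof -
  obtain k' where k': "k = Suc k'" using k by (cases k) auto
  have q01: "0 \<le> q" "q \<le> 1" using q by auto
  let ?P = "run_prob k A m" and ?W = "weight k q"
  have hit: "(1 - q) * (\<Sum>s<k. ?P s) = run_prob k A (Suc m) 0 * ?W 0"
    using run_prob_Suc_hit[OF k ind m] weight_0[OF k q01] q by simp
  have miss: "(\<Sum>s<k'. q * ?P s * ?W (Suc s)) = (\<Sum>s<k'. run_prob k A (Suc m) (Suc s) * ?W (Suc s))"
    using run_prob_Suc_miss[OF k ind m] q k' by (intro sum.cong) auto
  have last_term: "(\<Sum>s<k. q * ?P s * ?W (Suc s)) = (\<Sum>s<k'. q * ?P s * ?W (Suc s))"
    using weight_vanishes[of k "Suc k'" q] by (simp add: k')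
  have "fk k q * potential k A m q = (\<Sum>s<k. ?P s * (fk k q * ?W s))"
    unfolding potential_def sum_distrib_left by (simp add: mult_ac)
  also have "\<dots> = (\<Sum>s<k. ?P s * ((1 - q) + q * ?W (Suc s)))"
    using weight_step[OF k q01] by simp
  also have "\<dots> = (1 - q) * (\<Sum>s<k. ?P s) + (\<Sum>s<k. q * ?P s * ?W (Suc s))"
    by (simp add: distrib_left sum.distrib sum_distrib_left mult_ac)
  also have "\<dots> = run_prob k A (Suc m) 0 * ?W 0 + (\<Sum>s<k'. run_prob k A (Suc m) (Suc s) * ?W (Suc s))"
    unfolding last_term hit miss ..
  also have "\<dots> = potential k A (Suc m) q"
    unfolding potential_def k' sum.lessThan_Suc_shift ..
  finally show ?thesis .
qed

lemma potential_antitone: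
  assumes "k \<ge> 1" "0 \<le> q1" "q1 \<le> q2" "q2 \<le> 1"
  shows "potential k A m q2 \<le> potential k A m q1"
  unfolding potential_def run_prob_def
  by (intro sum_mono mult_left_mono weight_antitone[OF assms]) simp

text \<open>Since all weights are at most 1, the potential is at most P(no gap).\<close>
lemma potential_le_no_gap:
  assumes k: "k \<ge> 1" and A: "A ` {1..m} \<subseteq> events" and q: "0 \<le> q" "q \<le> 1"
  shows "potential k A m q \<le> prob (no_gap_event (space M) k A m)"
  unfolding potential_def prob_no_gap_event[OF k A]
  by (intro sum_mono mult_right_le_one_le weight_bounds[OF k q]) (simp_all add: run_prob_def)

text \<open>The theorem for nondecreasing hit probabilities, i.e. nonincreasing miss probabilities
  q(i): the product of the factors f_k(q(i)) is bounded by the potential, evaluated at the miss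
  probability of the next trial.\<close>
lemma no_gap_prob_ge_mono:
  assumes k: "k \<ge> 1" and ind: "indep_events A {1..n}" and mono: "mono_on {1..n} (\<lambda>i. prob (A i))"
  shows "(\<Prod>i=1..n. fk k (1 - prob (A i))) \<le> prob (no_gap_event (space M) k A n)"
proof -
  define q where "q i = 1 - prob (A i)" for i
  have q01: "0 \<le> q i" "q i \<le> 1" for i unfolding q_def by auto
  have f0: "0 \<le> fk k (q i)" for i using fk_basic[OF k q01] by simp
  have A: "A ` {1..n} \<subseteq> events" using ind unfolding indep_events_def by simp
  have bound: "(\<Prod>i=1..m. fk k (q i)) \<le> potential k A m (q (Suc m))" if "m < n" for m
    using that
  proof (induction m)
    case 0
    then show ?case using potential_start[OF k q01] by simp
  next
    case (Suc m)
    have "q (Suc (Suc m)) \<le> q (Suc m)"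
      using mono Suc.prems unfolding q_def monotone_on_def by auto
    then have "potential k A (Suc m) (q (Suc m)) \<le> potential k A (Suc m) (q (Suc (Suc m)))"
      using potential_antitone[OF k q01(1)] q01(2) by blast
    moreover have "(\<Prod>i=1..Suc m. fk k (q i)) \<le> fk k (q (Suc m)) * potential k A m (q (Suc m))"
      using Suc f0 by (simp add: mult.commute mult_left_mono)
    ultimately show ?case using potential_step[OF k ind, of m] Suc.prems q_def by simp
  qed
  show ?thesis
  proof (cases n)
    case 0
    then show ?thesis by (simp add: no_gap_event_def prob_space)
  next
    case (Suc m)
    have "(\<Prod>i=1..n. fk k (q i)) \<le> fk k (q n) * potential k A m (q n)"
      using bound[of m] f0 Suc by (simp add: mult.commute mult_left_mono)
    also have "\<dots> = potential k A n (q n)"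
      using potential_step[OF k ind, of m] Suc q_def by simp
    also have "\<dots> \<le> prob (no_gap_event (space M) k A n)"
      by (rule potential_le_no_gap[OF k A q01])
    finally show ?thesis unfolding q_def .
  qed
qed

lemma no_gap_prob_ge_antimono:
  assumes k: "k \<ge> 1" and ind: "indep_events A {1..n}"
    and anti: "antimono_on {1..n} (\<lambda>i. prob (A i))"
  shows "(\<Prod>i=1..n. fk k (1 - prob (A i))) \<le> prob (no_gap_event (space M) k A n)"
proof -
  define B where "B i = A (n + 1 - i)" for i
  have "indep_events B {1..n}"
    unfolding B_def by (rule indep_events_reindex[OF bij_betw_reverse ind])
  moreover have "mono_on {1..n} (\<lambda>i. prob (B i))"
  proof (rule monotone_onI)
    fix i j assume "i \<in> {1..n}" "j \<in> {1..n}" "i \<le> j"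
    then have "n + 1 - j \<in> {1..n}" "n + 1 - i \<in> {1..n}" "n + 1 - j \<le> n + 1 - i" by auto
    then show "prob (B i) \<le> prob (B j)" using anti unfolding B_def monotone_on_def by blast
  qed
  ultimately have "(\<Prod>i=1..n. fk k (1 - prob (B i))) \<le> prob (no_gap_event (space M) k B n)"
    by (rule no_gap_prob_ge_mono[OF k])
  moreover have "no_gap_event (space M) k B n = no_gap_event (space M) k A n"
    unfolding no_gap_event_eq[OF k, symmetric] B_def has_k_gap_reverse[OF k] ..
  moreover have "(\<Prod>i=1..n. fk k (1 - prob (B i))) = (\<Prod>i=1..n. fk k (1 - prob (A i)))"
    unfolding B_def by (rule prod.reindex_bij_witness[of _ "\<lambda>i. n + 1 - i" "\<lambda>i. n + 1 - i"]) auto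
  ultimately show ?thesis by simp
qed

end

theorem mainTheorem3:
  fixes M :: "'a measure" and A :: "nat \<Rightarrow> 'a set" and k n :: nat
  assumes "prob_space M"
    and "k \<ge> 1"
    and "\<forall>i\<in>{1..n}. A i \<in> sets M"
    and "prob_space.indep_events M A {1..n}"
    and "mono_on {1..n} (\<lambda>i. measure M (A i)) \<or> antimono_on {1..n} (\<lambda>i. measure M (A i))"
  shows "measure M {w \<in> space M. \<not> has_k_gap k n A w} \<ge> (\<Prod>i=1..n. fk k (1 - measure M (A i)))"
proof -
  interpret prob_space M by fact
  show ?thesis
    unfolding no_gap_event_eq[OF assms(2)]
    using assms(5) no_gap_prob_ge_mono[OF assms(2,4)] no_gap_prob_ge_antimono[OF assms(2,4)] by blast
qed

end
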